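(* There exist an instance domain $\mathcal{X}$ and a hypothesis class $\mathcal{H}$ consisting of a single hypothesis such that the following holds for all integers $k,l\ge0$: if $k<l$, then for any $a\ge 0$ there exists a strategy of the adversary, all of whose presented sequences satisfy the $l$-bias assumption with respect to $\mathcal{H}$, such that any algorithm guaranteeing a cumulative mistake penalty of at most $k$ in the randomized prediction model must have cumulative abstention penalty at least $a$.
   Context: Randomized prediction model: at round $t$ the adversary presents $x_t\in\mathcal{X}$; the learner outputs $(p_{t,-},p_{t,+},1-p_{t,-}-p_{t,+})$ with $p_{t,-},p_{t,+}\ge0$, $p_{t,-}+p_{t,+}\le 1$ (probabilities of predicting $-1$, $+1$, abstaining); the adversary reveals $y_t\in\{-1,+1\}$. After $n$ rounds the cumulative mistake penalty is $\sum_{t=1}^n \big(I(y_t=-1)p_{t,+}+I(y_t=+1)p_{t,-}\big)$ and the cumulative abstention penalty is $\sum_{t=1}^n(1-p_{t,+}-p_{t,-})$. Hypotheses are maps $\mathcal{X}\to\{-1,+1\}$. $\mathcal{C}^l$ is the class of functions $x\mapsto 1-2I(x\in D)$ for $D\subseteq\mathcal{X}$, $|D|\le l$, and $\mathcal{H}^l=\{x\mapsto h(x)c(x): h\in\mathcal{H},c\in\mathcal{C}^l\}$. A sequence $(x_1,y_1),\dots,(x_n,y_n)$ satisfies the $l$-bias assumption w.r.t. $\mathcal{H}$ if some $h\in\mathcal{H}^l$ has $h(x_t)=y_t$ for all $t$. An algorithm guarantees cumulative mistake penalty at most $k$ if this holds on every admissible sequence. *)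

theory Defs
  imports Complex_Main
begin

text \<open>Labels and hypothesis values are integers in {-1, +1}.
  A learner (deterministic algorithm in the randomized prediction model) maps the history of
  revealed (instance, label) pairs and the current instance to the pair
  (p_minus, p_plus) of probabilities of predicting -1 and +1; the rest is the abstention
  probability.\<close>

type_synonym 'x learner = "('x \<times> int) list \<Rightarrow> 'x \<Rightarrow> real \<times> real"

definition valid_learner :: "'x learner \<Rightarrow> bool" where
  "valid_learner A \<longleftrightarrow>
     (\<forall>hist x. 0 \<le> fst (A hist x) \<and> 0 \<le> snd (A hist x) \<and> fst (A hist x) + snd (A hist x) \<le> 1)"

definition mistake_penalty :: "'x learner \<Rightarrow> ('x \<times> int) list \<Rightarrow> real" where
  "mistake_penalty A s =
     (\<Sum>t<length s. (let x = fst (s ! t); y = snd (s ! t); p = A (take t s) x in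
        (if y = -1 then 1 else 0) * snd p + (if y = 1 then 1 else 0) * fst p))"

definition abstention_penalty :: "'x learner \<Rightarrow> ('x \<times> int) list \<Rightarrow> real" where
  "abstention_penalty A s =
     (\<Sum>t<length s. (let x = fst (s ! t); p = A (take t s) x in 1 - snd p - fst p))"

definition Cl :: "'x set \<Rightarrow> nat \<Rightarrow> ('x \<Rightarrow> int) set" where
  "Cl X l = {c. \<exists>D. D \<subseteq> X \<and> finite D \<and> card D \<le> l \<and> c = (\<lambda>x. 1 - 2 * (if x \<in> D then 1 else 0))}"

definition Hl :: "'x set \<Rightarrow> ('x \<Rightarrow> int) set \<Rightarrow> nat \<Rightarrow> ('x \<Rightarrow> int) set" where
  "Hl X H l = {g. \<exists>h\<in>H. \<exists>c\<in>Cl X l. g = (\<lambda>x. h x * c x)}"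

definition l_bias :: "'x set \<Rightarrow> ('x \<Rightarrow> int) set \<Rightarrow> nat \<Rightarrow> ('x \<times> int) list \<Rightarrow> bool" where
  "l_bias X H l s \<longleftrightarrow>
     (\<forall>(x, y)\<in>set s. x \<in> X \<and> y \<in> {-1, 1}) \<and> (\<exists>g\<in>Hl X H l. \<forall>(x, y)\<in>set s. g x = y)"

definition guarantees_mistakes :: "'x set \<Rightarrow> ('x \<Rightarrow> int) set \<Rightarrow> nat \<Rightarrow> 'x learner \<Rightarrow> real \<Rightarrow> bool" where
  "guarantees_mistakes X H l A k \<longleftrightarrow> (\<forall>s. l_bias X H l s \<longrightarrow> mistake_penalty A s \<le> k)"

text \<open>Adaptive deterministic adversary: chooses the next instance from the full history
  (instances, learner's announced probabilities, labels) and chooses the label after seeing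
  the learner's current probabilities.\<close>

type_synonym 'x transcript = "('x \<times> (real \<times> real) \<times> int) list"

definition strip :: "'x transcript \<Rightarrow> ('x \<times> int) list" where
  "strip tr = map (\<lambda>(x, p, y). (x, y)) tr"

fun play :: "('x transcript \<Rightarrow> 'x) \<Rightarrow> ('x transcript \<Rightarrow> 'x \<Rightarrow> real \<times> real \<Rightarrow> int)
              \<Rightarrow> 'x learner \<Rightarrow> nat \<Rightarrow> 'x transcript" where
  "play ax ay A 0 = []"
| "play ax ay A (Suc n) =
     (let tr = play ax ay A n; x = ax tr; p = A (strip tr) x; y = ay tr x p in tr @ [(x, p, y)])"

end

theory Submission
  imports Defs
begin

text \<open>Take a single hypothesis, the constant 1 on all of \<open>\<nat>\<close>, and let the adversary present
  a fresh instance every round. It answers \<open>-1\<close> whenever fewer than \<open>l\<close> negative labels have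
  been given and the learner puts probability at least \<open>\<epsilon>\<close> on \<open>+1\<close>, and \<open>+1\<close> otherwise.
  At most \<open>l\<close> labels are negative, so the sequence is \<open>l\<close>-biased. Each negative label costs
  the learner at least \<open>\<epsilon>\<close> mistakes; with \<open>\<epsilon> l > k\<close> a learner guaranteeing \<open>k\<close> mistakes thus
  never lets the adversary give \<open>l\<close> negatives, and then every positive round costs it at least
  \<open>1 - \<epsilon>\<close> in abstention plus mistakes. Over enough rounds the abstention penalty exceeds \<open>a\<close>.\<close>

lemma sum_prefixes_snoc:
  "(\<Sum>t<length (s @ [e]). F (take t (s @ [e])) ((s @ [e]) ! t)) =
     (\<Sum>t<length s. F (take t s) (s ! t)) + F s e"
proof -
  have "(\<Sum>t<length s. F (take t (s @ [e])) ((s @ [e]) ! t)) = (\<Sum>t<length s. F (take t s) (s ! t))"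
    by (rule sum.cong) (auto simp: nth_append)
  then show ?thesis by simp
qed

lemma mistake_penalty_snoc:
  "mistake_penalty A (s @ [(x, y)]) = mistake_penalty A s +
     ((if y = -1 then 1 else 0) * snd (A s x) + (if y = 1 then 1 else 0) * fst (A s x))"
  unfolding mistake_penalty_def
  using sum_prefixes_snoc[of "\<lambda>h e. let x = fst e; y = snd e; p = A h x in
        (if y = -1 then 1 else 0) * snd p + (if y = 1 then 1 else 0) * fst p" s "(x, y)"]
  by (simp add: Let_def)

lemma abstention_penalty_snoc:
  "abstention_penalty A (s @ [(x, y)]) = abstention_penalty A s + (1 - snd (A s x) - fst (A s x))"
  unfolding abstention_penalty_def
  using sum_prefixes_snoc[of "\<lambda>h e. let x = fst e; p = A h x in 1 - snd p - fst p" s "(x, y)"]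
  by (simp add: Let_def)

lemma length_play [simp]: "length (play ax ay A n) = n"
  by (induction n) (simp_all add: Let_def)

lemma map_fst_strip_play_length: "map fst (strip (play length ay A n)) = [0..<n]"
  by (induction n) (simp_all add: strip_def Let_def)

definition neg_count :: "('x \<times> int) list \<Rightarrow> nat" where
  "neg_count s = length (filter (\<lambda>e. snd e = -1) s)"

lemma neg_count_snoc [simp]:
  "neg_count (s @ [(x, y)]) = neg_count s + (if y = -1 then 1 else 0)"
  by (simp add: neg_count_def)

definition threshold_adversary :: "nat \<Rightarrow> real \<Rightarrow> 'x transcript \<Rightarrow> 'x \<Rightarrow> real \<times> real \<Rightarrow> int" where
  "threshold_adversary l \<epsilon> tr x p = (if neg_count (strip tr) < l \<and> \<epsilon> \<le> snd p then -1 else 1)"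

lemma strip_play_threshold_Suc:
  "strip (play ax (threshold_adversary l \<epsilon>) A (Suc n)) =
     (let s = strip (play ax (threshold_adversary l \<epsilon>) A n);
          x = ax (play ax (threshold_adversary l \<epsilon>) A n); p = A s x
      in s @ [(x, if neg_count s < l \<and> \<epsilon> \<le> snd p then -1 else 1)])"
  by (simp add: strip_def Let_def threshold_adversary_def)

lemma labels_play_threshold:
  "\<forall>(x, y)\<in>set (strip (play ax (threshold_adversary l \<epsilon>) A n)). y \<in> {-1, 1}"
  by (induction n) (simp add: strip_def, unfold strip_play_threshold_Suc Let_def, auto)

lemma neg_count_play_threshold_le: "neg_count (strip (play ax (threshold_adversary l \<epsilon>) A n)) \<le> l"
  by (induction n) (simp add: strip_def neg_count_def, unfold strip_play_threshold_Suc Let_def, auto)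

lemma mistake_penalty_play_threshold_ge:
  assumes "valid_learner A"
  shows "\<epsilon> * neg_count (strip (play ax (threshold_adversary l \<epsilon>) A n))
           \<le> mistake_penalty A (strip (play ax (threshold_adversary l \<epsilon>) A n))"
proof (induction n)
  case 0
  then show ?case by (simp add: strip_def neg_count_def mistake_penalty_def)
next
  case (Suc n)
  define s where "s = strip (play ax (threshold_adversary l \<epsilon>) A n)"
  define x where "x = ax (play ax (threshold_adversary l \<epsilon>) A n)"
  define p where "p = A s x"
  have step: "strip (play ax (threshold_adversary l \<epsilon>) A (Suc n)) =
                 s @ [(x, if neg_count s < l \<and> \<epsilon> \<le> snd p then -1 else 1)]"
    unfolding strip_play_threshold_Suc Let_def s_def x_def p_def ..
  have "0 \<le> fst p" using assms by (simp add: valid_learner_def p_def)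
  then show ?case
    using Suc unfolding step by (simp add: mistake_penalty_snoc flip: s_def p_def) (simp add: algebra_simps)
qed

lemma abstention_mistake_play_threshold_ge:
  assumes "valid_learner A"
    and "neg_count (strip (play ax (threshold_adversary l \<epsilon>) A n)) < l"
  shows "(1 - \<epsilon>) * (real n - neg_count (strip (play ax (threshold_adversary l \<epsilon>) A n)))
           \<le> abstention_penalty A (strip (play ax (threshold_adversary l \<epsilon>) A n))
             + mistake_penalty A (strip (play ax (threshold_adversary l \<epsilon>) A n))"
  using assms(2)
proof (induction n)
  case 0
  then show ?case by (simp add: strip_def neg_count_def mistake_penalty_def abstention_penalty_def)
next
  case (Suc n)
  define s where "s = strip (play ax (threshold_adversary l \<epsilon>) A n)"
  define x where "x = ax (play ax (threshold_adversary l \<epsilon>) A n)"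
  define p where "p = A s x"
  have step: "strip (play ax (threshold_adversary l \<epsilon>) A (Suc n)) =
                 s @ [(x, if neg_count s < l \<and> \<epsilon> \<le> snd p then -1 else 1)]"
    unfolding strip_play_threshold_Suc Let_def s_def x_def p_def ..
  have valid: "0 \<le> fst p" "0 \<le> snd p" "fst p + snd p \<le> 1"
    using assms(1) by (auto simp: valid_learner_def p_def)
  have "neg_count s < l" using Suc.prems unfolding step by (simp split: if_splits)
  then have IH: "(1 - \<epsilon>) * (real n - neg_count s) \<le> abstention_penalty A s + mistake_penalty A s"
    using Suc.IH by (simp add: s_def)
  \<comment> \<open>a negative round shifts both sides equally; a positive one gains \<open>1 - snd p > 1 - \<epsilon>\<close>\<close>
  show ?case
    using IH valid \<open>neg_count s < l\<close> unfolding step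
    by (simp add: mistake_penalty_snoc abstention_penalty_snoc flip: p_def)
       (auto simp: algebra_simps)
qed

lemma l_bias_const_one_if_few_negatives:
  assumes distinct: "distinct (map fst s)"
    and labels: "\<forall>(x, y)\<in>set s. y \<in> {-1, 1}"
    and few: "neg_count s \<le> l"
  shows "l_bias UNIV {\<lambda>_. 1} l s"
proof -
  define D where "D = fst ` set (filter (\<lambda>e. snd e = -1) s)"
  define c :: "'a \<Rightarrow> int" where "c = (\<lambda>x. 1 - 2 * (if x \<in> D then 1 else 0))"
  have "card D \<le> card (set (filter (\<lambda>e. snd e = -1) s))"
    unfolding D_def by (rule card_image_le) simp
  also have "\<dots> \<le> neg_count s"
    unfolding neg_count_def by (rule card_length)
  finally have "card D \<le> l" using few by simp
  moreover have "finite D" by (simp add: D_def)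
  ultimately have "c \<in> Cl UNIV l"
    unfolding Cl_def c_def by blast
  then have "(\<lambda>x. 1 * c x) \<in> Hl UNIV {\<lambda>_. 1} l"
    unfolding Hl_def by (intro CollectI bexI[of _ "\<lambda>_. 1"] bexI[of _ c]) simp_all
  moreover have "c x = y" if xy: "(x, y) \<in> set s" for x y
  proof -
    have "x \<in> D \<longleftrightarrow> y = -1"
    proof
      assume "x \<in> D"
      then obtain y' where "(x, y') \<in> set s" "y' = -1" by (auto simp: D_def)
      then show "y = -1" using eq_key_imp_eq_value[OF distinct xy] by simp
    next
      assume "y = -1"
      then show "x \<in> D" using xy unfolding D_def by (auto intro: image_eqI[of _ fst "(x, y)"])
    qed
    then show ?thesis using labels xy by (auto simp: c_def)
  qed
  ultimately show ?thesis
    using labels unfolding l_bias_def by (intro conjI bexI[of _ "\<lambda>x. 1 * c x"]) auto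
qed

lemma abstention_penalty_play_threshold_ge:
  assumes valid: "valid_learner A"
    and mistakes: "mistake_penalty A (strip (play ax (threshold_adversary l \<epsilon>) A n)) \<le> k"
    and "0 \<le> \<epsilon>" "\<epsilon> \<le> 1" "k < \<epsilon> * l"
  shows "(1 - \<epsilon>) * (real n - l) - k \<le> abstention_penalty A (strip (play ax (threshold_adversary l \<epsilon>) A n))"
proof -
  define s where "s = strip (play ax (threshold_adversary l \<epsilon>) A n)"
  have "\<epsilon> * neg_count s \<le> k"
    using mistake_penalty_play_threshold_ge[OF valid, of \<epsilon> ax l n] mistakes unfolding s_def by linarith
  then have "neg_count s < l"
    using \<open>0 \<le> \<epsilon>\<close> \<open>k < \<epsilon> * l\<close> mult_left_mono[of "real l" "neg_count s" \<epsilon>] by fastforce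
  then have "(1 - \<epsilon>) * (real n - neg_count s) \<le> abstention_penalty A s + mistake_penalty A s"
    using abstention_mistake_play_threshold_ge[OF valid] by (simp add: s_def)
  moreover have "(1 - \<epsilon>) * (real n - l) \<le> (1 - \<epsilon>) * (real n - neg_count s)"
    using \<open>neg_count s < l\<close> \<open>\<epsilon> \<le> 1\<close> by (intro mult_left_mono) auto
  ultimately show ?thesis
    using mistakes by (simp add: s_def)
qed

lemma l_bias_play_threshold_length:
  "l_bias UNIV {\<lambda>_. 1} l (strip (play length (threshold_adversary l \<epsilon>) A n))"
  by (intro l_bias_const_one_if_few_negatives labels_play_threshold neg_count_play_threshold_le)
     (simp add: map_fst_strip_play_length)

lemma threshold_parameters:
  fixes k l :: nat and a :: real
  assumes "k < l"
  obtains \<epsilon> :: real and n :: nat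
  where "0 \<le> \<epsilon>" "\<epsilon> \<le> 1" "real k < \<epsilon> * real l" "a \<le> (1 - \<epsilon>) * (real n - real l) - real k"
proof
  define \<epsilon> :: real where "\<epsilon> = (real k + real l) / (2 * real l)"
  define n :: nat where "n = nat \<lceil>(a + real k) / (1 - \<epsilon>)\<rceil> + l"
  show \<epsilon>: "0 \<le> \<epsilon>" "\<epsilon> \<le> 1" "real k < \<epsilon> * real l"
    using assms by (auto simp: \<epsilon>_def field_simps)
  have "\<epsilon> < 1" using assms by (simp add: \<epsilon>_def field_simps)
  have "(a + real k) / (1 - \<epsilon>) \<le> real n - real l"
    unfolding n_def by linarith
  then have "a + real k \<le> (1 - \<epsilon>) * (real n - real l)"
    using \<open>\<epsilon> < 1\<close> by (simp add: pos_divide_le_eq mult.commute)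
  then show "a \<le> (1 - \<epsilon>) * (real n - real l) - real k"
    by linarith
qed

lemma threshold_adversary_forces_abstention:
  assumes "k < l"
  shows "\<exists>n ay. (\<forall>A. valid_learner A \<longrightarrow> l_bias UNIV {\<lambda>_. 1} l (strip (play length ay A n))) \<and>
           (\<forall>A. valid_learner A \<and> guarantees_mistakes UNIV {\<lambda>_. 1} l A (real k) \<longrightarrow>
              a \<le> abstention_penalty A (strip (play length ay A n)))"
proof -
  obtain \<epsilon> n where \<epsilon>: "0 \<le> \<epsilon>" "\<epsilon> \<le> 1" "real k < \<epsilon> * real l"
    and n: "a \<le> (1 - \<epsilon>) * (real n - real l) - real k"
    using threshold_parameters[OF assms] .
  have "a \<le> abstention_penalty A (strip (play length (threshold_adversary l \<epsilon>) A n))"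
    if "valid_learner A" and "guarantees_mistakes UNIV {\<lambda>_. 1} l A (real k)" for A
  proof -
    have "mistake_penalty A (strip (play length (threshold_adversary l \<epsilon>) A n)) \<le> real k"
      using that(2) l_bias_play_threshold_length unfolding guarantees_mistakes_def by blast
    from abstention_penalty_play_threshold_ge[OF that(1) this \<epsilon>] n show ?thesis
      by linarith
  qed
  then show ?thesis
    using l_bias_play_threshold_length by blast
qed

theorem mainTheorem3:
  shows "\<exists>(X :: nat set) (h :: nat \<Rightarrow> int). (\<forall>x\<in>X. h x \<in> {-1, 1}) \<and>
     (\<forall>k l :: nat. k < l \<longrightarrow>
        (\<forall>a :: real. 0 \<le> a \<longrightarrow>
           (\<exists>(n :: nat) ax ay.
              (\<forall>A. valid_learner A \<longrightarrow> l_bias X {h} l (strip (play ax ay A n))) \<and>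
              (\<forall>A. valid_learner A \<and> guarantees_mistakes X {h} l A (real k) \<longrightarrow>
                   a \<le> abstention_penalty A (strip (play ax ay A n))))))"
  using threshold_adversary_forces_abstention
  by (intro exI[of _ UNIV] exI[of _ "\<lambda>_. 1"] conjI allI impI) (simp, blast)

end
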